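(* There exists a domain $\mathcal{X}$ and a concept class $\mathcal{C}\subseteq\{\pm1\}^{\mathcal{X}}$ with $\mathrm{VCdim}(\mathcal{C})=1$ such that the following holds. For every horizon $T\ge 1$ there exists an (oblivious, randomized) adversary strategy in the adversarial injection model with unknown $\mathcal{D}$, i.e. a random choice of target $c^\star\in\mathcal{C}$, of distribution $\mathcal{D}$ over $\mathcal{X}$, of the hidden bits $q_1,\dots,q_T$ and of the injected points, all made independently of the learner's actions, such that every learner satisfies \[ \mathbb{E}[err_{\mathrm{mis}}]+\mathbb{E}[err_{\mathrm{abs}}]=\Omega(\sqrt{T}), \] where the constant in $\Omega(\cdot)$ is absolute and the expectation is over the adversary's randomness, the i.i.d. draws and the learner's randomness.
   Context: Adversarial injection model: $\mathcal{X}$ is a domain, $\mathcal{C}\subseteq\{\pm1\}^{\mathcal{X}}$ a concept class. An adversary fixes (possibly at random) a target $c^\star\in\mathcal{C}$ and a distribution $\mathcal{D}$ over $\mathcal{X}$, both unknown to the learner and fixed throughout. For rounds $t=1,\dots,T$: the adversary chooses a hidden bit $q_t\in\{0,1\}$; if $q_t=0$, $x_t\sim\mathcal{D}$ is drawn independently of the past (an i.i.d. round); if $q_t=1$, the adversary chooses $x_t\in\mathcal{X}$ arbitrarily (an injected round). The adversary's choices at round $t$ may depend on the history up to round $t-1$. The learner observes $x_t$ (never $q_t$), outputs $\hat y_t\in\{+1,-1,\perp\}$ (where $\perp$ means abstain), and then observes the true label $y_t=c^\star(x_t)$. The errors are $err_{\mathrm{mis}}=\sum_{t=1}^T\mathbf{1}[\hat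 y_t\ne y_t\wedge \hat y_t\ne\perp]$ and $err_{\mathrm{abs}}=\sum_{t=1}^T\mathbf{1}[\hat y_t=\perp\wedge q_t=0]$. *)

theory Defs
  imports "HOL-Probability.Probability" "HOL-Library.Extended_Nat"
begin

text \<open>Domain: nat. Labels: True = +1, False = -1. Predictions: Some b, or None = abstain.\<close>

definition shatters :: "(nat \<Rightarrow> bool) set \<Rightarrow> nat set \<Rightarrow> bool" where
  "shatters C S \<longleftrightarrow> (\<forall>B \<subseteq> S. \<exists>c \<in> C. \<forall>x \<in> S. c x \<longleftrightarrow> x \<in> B)"

definition vc_dim :: "(nat \<Rightarrow> bool) set \<Rightarrow> enat" where
  "vc_dim C = Sup {enat (card S) | S. finite S \<and> shatters C S}"

text \<open>What the learner sees after each round: point, its own prediction, true label.\<close>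
type_synonym history = "(nat \<times> bool option \<times> bool) list"

type_synonym learner = "history \<Rightarrow> nat \<Rightarrow> bool option pmf"

text \<open>Full record of a round: point, prediction, true label, hidden bit q.\<close>
type_synonym trace = "(nat \<times> bool option \<times> bool \<times> bool) list"

definition visible :: "trace \<Rightarrow> history" where
  "visible h = map (\<lambda>(x, p, y, q). (x, p, y)) h"

text \<open>Oblivious adversary's choice: target, distribution D, hidden bits q, injected points z.
  Round t (0-based) draws x_t ~ D if q t is False, otherwise x_t = z t.\<close>
fun run :: "learner \<Rightarrow> (nat \<Rightarrow> bool) \<Rightarrow> nat pmf \<Rightarrow> (nat \<Rightarrow> bool) \<Rightarrow> (nat \<Rightarrow> nat) \<Rightarrow> nat \<Rightarrow> trace pmf" where
  "run L c D q z 0 = return_pmf []"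
| "run L c D q z (Suc t) =
     bind_pmf (run L c D q z t) (\<lambda>h.
     bind_pmf (if q t then return_pmf (z t) else D) (\<lambda>x.
     bind_pmf (L (visible h) x) (\<lambda>p.
     return_pmf (h @ [(x, p, c x, q t)]))))"

definition err_mis :: "trace \<Rightarrow> nat" where
  "err_mis h = length (filter (\<lambda>(x, p, y, q). p \<noteq> None \<and> p \<noteq> Some y) h)"

definition err_abs :: "trace \<Rightarrow> nat" where
  "err_abs h = length (filter (\<lambda>(x, p, y, q). p = None \<and> \<not> q) h)"

type_synonym adversary = "((nat \<Rightarrow> bool) \<times> nat pmf \<times> (nat \<Rightarrow> bool) \<times> (nat \<Rightarrow> nat)) pmf"

definition game :: "adversary \<Rightarrow> learner \<Rightarrow> nat \<Rightarrow> trace pmf" where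
  "game A L T = bind_pmf A (\<lambda>(c, D, q, z). run L c D q z T)"

end

theory Submission
  imports Defs "HOL-Library.Nat_Bijection" "HOL-Library.Sublist" "HOL-Library.Discrete_Functions"
begin

text \<open>Points encode words over \<open>nat\<close>, and the concept of a word \<open>w\<close> labels a point
  positive iff its word is a prefix of \<open>w\<close>. Prefixes of a common word are comparable, so no
  two points are shattered.

  Let \<open>m = floor_sqrt T\<close> and cut the rounds into phases of length \<open>m\<close>. A world is a pair
  \<open>(J, \<sigma>)\<close> of a depth \<open>J \<le> m\<close> and a word \<open>\<sigma>\<close> of length \<open>m\<close> over \<open>2 m\<close> letters; its
  target is the prefix of \<open>\<sigma>\<close> of length \<open>J\<close>, and \<open>D\<close> is uniform on the \<open>2 m\<close> (negative)
  children of that prefix. In a phase \<open>j < J\<close> the adversary injects uniform children of the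
  prefix of length \<open>j\<close>, so that this phase looks exactly like the i.i.d. phase \<open>j\<close> of the
  world \<open>(j, \<sigma>)\<close>. The adversary picks a uniform world.

  In phase \<open>j\<close>, take a child \<open>y\<close> of the prefix of length \<open>j\<close> that has not been shown yet.
  Abstaining on \<open>y\<close> costs in the world \<open>(j, \<sigma>)\<close>, and predicting \<open>-1\<close> on \<open>y\<close> costs in each
  of the \<open>m - j\<close> worlds \<open>(J, \<sigma>')\<close> with \<open>J > j\<close> and \<open>\<sigma>'\<close> choosing \<open>y\<close> at position \<open>j\<close>;
  until \<open>y\<close> is shown, those worlds produce the same view as \<open>(j, \<sigma>)\<close>. As fewer than \<open>m\<close>
  children have been shown, a round of phase \<open>j\<close> costs at least \<open>(m - j) / (4 m (m + 1))\<close>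
  on average over the worlds, and the \<open>m\<^sup>2\<close> rounds add up to \<open>m / 8 \<ge> sqrt T / 16\<close>.\<close>

section \<open>Plays with a schedule of point distributions\<close>

fun play :: "learner \<Rightarrow> (nat \<Rightarrow> bool) \<Rightarrow> (nat \<Rightarrow> nat pmf) \<Rightarrow> (nat \<Rightarrow> bool) \<Rightarrow> nat \<Rightarrow> trace pmf" where
  "play L c X q 0 = return_pmf []"
| "play L c X q (Suc t) = bind_pmf (play L c X q t) (\<lambda>h. bind_pmf (X t) (\<lambda>x.
     bind_pmf (L (visible h) x) (\<lambda>p. return_pmf (h @ [(x, p, c x, q t)]))))"

fun play_view :: "learner \<Rightarrow> (nat \<Rightarrow> bool) \<Rightarrow> (nat \<Rightarrow> nat pmf) \<Rightarrow> nat \<Rightarrow> history pmf" where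
  "play_view L c X 0 = return_pmf []"
| "play_view L c X (Suc t) = bind_pmf (play_view L c X t) (\<lambda>h. bind_pmf (X t) (\<lambda>x.
     map_pmf (\<lambda>p. h @ [(x, p, c x)]) (L h x)))"

fun draws :: "(nat \<Rightarrow> 'a pmf) \<Rightarrow> nat \<Rightarrow> 'a list pmf" where
  "draws \<mu> 0 = return_pmf []"
| "draws \<mu> (Suc n) = bind_pmf (draws \<mu> n) (\<lambda>l. map_pmf (\<lambda>i. l @ [i]) (\<mu> n))"

lemma run_eq_play: "run L c D q z t = play L c (\<lambda>t. if q t then return_pmf (z t) else D) q t"
  by (induction t) auto

lemma play_cong: "(\<And>s. s < t \<Longrightarrow> X s = X' s) \<Longrightarrow> play L c X q t = play L c X' q t"
  by (induction t) auto

lemma play_view_cong: "(\<And>s. s < t \<Longrightarrow> X s = X' s) \<Longrightarrow> play_view L c X t = play_view L c X' t"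
  by (induction t) auto

lemma visible_snoc: "visible (h @ [(x, p, y, b)]) = visible h @ [(x, p, y)]"
  by (simp add: visible_def)

lemma map_visible_play: "map_pmf visible (play L c X q t) = play_view L c X t"
proof (induction t)
  case 0
  then show ?case by (simp add: visible_def)
next
  case (Suc t)
  have "map_pmf visible (play L c X q (Suc t)) =
    bind_pmf (play L c X q t) (\<lambda>h. bind_pmf (X t) (\<lambda>x.
     map_pmf (\<lambda>p. visible h @ [(x, p, c x)]) (L (visible h) x)))"
    by (simp add: map_bind_pmf map_pmf_def[symmetric] pmf.map_comp o_def visible_snoc)
  also have "\<dots> = bind_pmf (map_pmf visible (play L c X q t)) (\<lambda>h. bind_pmf (X t) (\<lambda>x.
     map_pmf (\<lambda>p. h @ [(x, p, c x)]) (L h x)))"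
    by (simp add: bind_map_pmf)
  finally show ?case using Suc by simp
qed

lemma length_draws: "l \<in> set_pmf (draws \<mu> n) \<Longrightarrow> length l = n"
  by (induction n arbitrary: l) auto

lemma bind_draws_play:
  "bind_pmf (draws \<mu> n) (\<lambda>u. play L c (\<lambda>t. Y t (u ! t)) q n) = play L c (\<lambda>t. bind_pmf (\<mu> t) (Y t)) q n"
proof (induction n)
  case 0
  then show ?case by simp
next
  case (Suc n)
  define step where "step = (\<lambda>N h. bind_pmf N (\<lambda>x.
     bind_pmf (L (visible h) x) (\<lambda>p. return_pmf (h @ [(x, p, c x, q n)]))))"
  have play_snoc: "play L c (\<lambda>t. Y t ((l @ [i]) ! t)) q (Suc n)
      = bind_pmf (play L c (\<lambda>t. Y t (l ! t)) q n) (step (Y n i))"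
    if "l \<in> set_pmf (draws \<mu> n)" for l i
  proof -
    have "length l = n" using that by (rule length_draws)
    moreover have "play L c (\<lambda>t. Y t ((l @ [i]) ! t)) q n = play L c (\<lambda>t. Y t (l ! t)) q n"
      by (rule play_cong) (simp add: nth_append \<open>length l = n\<close>)
    ultimately show ?thesis by (simp add: step_def nth_append)
  qed
  have "bind_pmf (draws \<mu> (Suc n)) (\<lambda>u. play L c (\<lambda>t. Y t (u ! t)) q (Suc n))
      = bind_pmf (draws \<mu> n) (\<lambda>l. bind_pmf (\<mu> n) (\<lambda>i. play L c (\<lambda>t. Y t ((l @ [i]) ! t)) q (Suc n)))"
    by (simp only: draws.simps bind_assoc_pmf bind_map_pmf)
  also have "\<dots> = bind_pmf (draws \<mu> n) (\<lambda>l. bind_pmf (\<mu> n) (\<lambda>i.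
      bind_pmf (play L c (\<lambda>t. Y t (l ! t)) q n) (step (Y n i))))"
    by (intro bind_pmf_cong refl play_snoc)
  also have "\<dots> = bind_pmf (draws \<mu> n) (\<lambda>l. bind_pmf (play L c (\<lambda>t. Y t (l ! t)) q n)
      (\<lambda>h. bind_pmf (\<mu> n) (\<lambda>i. step (Y n i) h)))"
    by (subst bind_commute_pmf) simp
  also have "\<dots> = bind_pmf (bind_pmf (draws \<mu> n) (\<lambda>l. play L c (\<lambda>t. Y t (l ! t)) q n))
      (step (bind_pmf (\<mu> n) (Y n)))"
    by (simp add: step_def bind_assoc_pmf)
  also have "\<dots> = play L c (\<lambda>t. bind_pmf (\<mu> t) (Y t)) q (Suc n)"
    by (simp add: Suc step_def)
  finally show ?case .
qed

lemma pmf_bind_map_Pair: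
  "pmf (bind_pmf M (\<lambda>a. map_pmf (Pair a) (N a))) (a, b) = pmf M a * pmf (N a) b"
proof -
  have "pmf (map_pmf (Pair a') (N a')) (a, b) = (if a' = a then pmf (N a) b else 0)" for a'
    by (cases "a' = a") (auto simp: pmf_map_inj' inj_on_def pmf_eq_0_set_pmf)
  then have "pmf (bind_pmf M (\<lambda>a. map_pmf (Pair a) (N a))) (a, b)
      = measure_pmf.expectation M (\<lambda>a'. if a' = a then pmf (N a) b else 0)"
    by (simp add: pmf_bind)
  also have "\<dots> = (\<Sum>a'\<in>{a}. (if a' = a then pmf (N a) b else 0) * pmf M a')"
    by (rule integral_measure_pmf_real) (auto split: if_splits)
  finally show ?thesis by simp
qed

lemma pmf_play_view_snoc:
  "pmf (play_view L c X (Suc n)) (h @ [(x, p, y)])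
     = pmf (play_view L c X n) h * pmf (X n) x * pmf (L h x) p * (if y = c x then 1 else 0)"
proof (cases "y = c x")
  case True
  let ?f = "\<lambda>(h :: history, x, p). h @ [(x, p, c x)]"
  have "play_view L c X (Suc n) = map_pmf ?f
      (bind_pmf (play_view L c X n) (\<lambda>h. map_pmf (Pair h) (bind_pmf (X n) (\<lambda>x. map_pmf (Pair x) (L h x)))))"
    by (simp add: map_bind_pmf pmf.map_comp o_def)
  moreover have "inj ?f"
    by (auto simp: inj_on_def)
  ultimately have "pmf (play_view L c X (Suc n)) (?f (h, x, p))
      = pmf (play_view L c X n) h * (pmf (X n) x * pmf (L h x) p)"
    by (simp only: pmf_map_inj' pmf_bind_map_Pair)
  then show ?thesis using True by simp
next
  case False
  then have "h @ [(x, p, y)] \<notin> set_pmf (play_view L c X (Suc n))" by auto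
  then show ?thesis using False by (simp add: pmf_eq_0_set_pmf)
qed

lemma pmf_play_view_eq_if_agree:
  assumes "\<And>s x. s < n \<Longrightarrow> x \<in> set_pmf (X s) \<Longrightarrow> x \<noteq> x\<^sub>0 \<Longrightarrow> c\<^sub>1 x = c\<^sub>2 x"
    and "x\<^sub>0 \<notin> fst ` set h"
  shows "pmf (play_view L c\<^sub>1 X n) h = pmf (play_view L c\<^sub>2 X n) h"
  using assms
proof (induction n arbitrary: h)
  case 0
  then show ?case by simp
next
  case (Suc n)
  show ?case
  proof (cases h rule: rev_cases)
    case Nil
    have "pmf (play_view L c X (Suc n)) [] = 0" for c
      by (auto simp: pmf_eq_0_set_pmf)
    with Nil show ?thesis by simp
  next
    case (snoc h' e)
    obtain x p y where e: "e = (x, p, y)" by (cases e) auto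
    have IH: "pmf (play_view L c\<^sub>1 X n) h' = pmf (play_view L c\<^sub>2 X n) h'"
      using Suc.prems snoc by (intro Suc.IH) (auto intro: less_SucI)
    show ?thesis
    proof (cases "x \<in> set_pmf (X n)")
      case True
      then have "c\<^sub>1 x = c\<^sub>2 x" using Suc.prems snoc e by auto
      then show ?thesis unfolding snoc e pmf_play_view_snoc using IH by simp
    next
      case False
      then show ?thesis unfolding snoc e pmf_play_view_snoc by (simp add: pmf_eq_0_set_pmf)
    qed
  qed
qed

lemma set_play_view:
  assumes "h \<in> set_pmf (play_view L c X n)"
  shows "length h = n" "\<And>r. r < n \<Longrightarrow> fst (h ! r) \<in> set_pmf (X r)"
proof -
  have "length h = n \<and> (\<forall>r<n. fst (h ! r) \<in> set_pmf (X r))"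
    using assms
  proof (induction n arbitrary: h)
    case 0
    then show ?case by simp
  next
    case (Suc n)
    then obtain h' x p where "h = h' @ [(x, p, c x)]" "h' \<in> set_pmf (play_view L c X n)" "x \<in> set_pmf (X n)"
      by auto
    with Suc.IH show ?case by (auto simp: nth_append less_Suc_eq)
  qed
  then show "length h = n" "\<And>r. r < n \<Longrightarrow> fst (h ! r) \<in> set_pmf (X r)" by auto
qed

lemma finite_set_pmf_option_bool: "finite (set_pmf (M :: bool option pmf))"
  by (rule finite_subset[of _ UNIV]) auto

lemma finite_set_play_view:
  "(\<And>s. s < n \<Longrightarrow> finite (set_pmf (X s))) \<Longrightarrow> finite (set_pmf (play_view L c X n))"
  by (induction n) (auto simp: finite_set_pmf_option_bool)

lemma finite_set_play:
  "(\<And>s. s < n \<Longrightarrow> finite (set_pmf (X s))) \<Longrightarrow> finite (set_pmf (play L c X q n))"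
  by (induction n) (auto simp: finite_set_pmf_option_bool)

lemma expectation_bind_pmf_finite:
  fixes g :: "'b \<Rightarrow> real"
  assumes "finite (set_pmf M)" "\<And>x. x \<in> set_pmf M \<Longrightarrow> finite (set_pmf (f x))"
  shows "measure_pmf.expectation (bind_pmf M f) g
       = measure_pmf.expectation M (\<lambda>x. measure_pmf.expectation (f x) g)"
proof -
  have "measure_pmf.expectation (bind_pmf M f) g
      = (\<Sum>a\<in>set_pmf M. pmf M a *\<^sub>R measure_pmf.expectation (f a) g)"
    by (rule pmf_expectation_bind) (use assms in auto)
  also have "\<dots> = measure_pmf.expectation M (\<lambda>x. measure_pmf.expectation (f x) g)"
    by (subst integral_measure_pmf[of "set_pmf M"]) (use assms in auto)
  finally show ?thesis .
qed

lemma expectation_cong_pmf: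
  fixes f :: "'a \<Rightarrow> real"
  assumes "finite (set_pmf M)" "finite (set_pmf N)" "\<And>h. f h \<noteq> 0 \<Longrightarrow> pmf M h = pmf N h"
  shows "measure_pmf.expectation M f = measure_pmf.expectation N f"
proof -
  have "measure_pmf.expectation M f = (\<Sum>a\<in>set_pmf M \<union> set_pmf N. f a * pmf M a)"
    by (rule integral_measure_pmf_real) (use assms in auto)
  also have "\<dots> = (\<Sum>a\<in>set_pmf M \<union> set_pmf N. f a * pmf N a)"
    by (rule sum.cong) (use assms(3) in fastforce)+
  also have "\<dots> = measure_pmf.expectation N f"
    by (rule integral_measure_pmf_real[symmetric]) (use assms in auto)
  finally show ?thesis .
qed

lemma expectation_mono_finite:
  fixes f g :: "'a \<Rightarrow> real"
  assumes "finite (set_pmf M)" "\<And>x. x \<in> set_pmf M \<Longrightarrow> f x \<le> g x"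
  shows "measure_pmf.expectation M f \<le> measure_pmf.expectation M g"
  by (rule integral_mono_AE)
     (use assms in \<open>auto simp: integrable_measure_pmf_finite AE_measure_pmf_iff\<close>)

lemma expectation_ge_const_finite:
  fixes f :: "'a \<Rightarrow> real"
  assumes "finite (set_pmf M)" "\<And>x. x \<in> set_pmf M \<Longrightarrow> c \<le> f x"
  shows "c \<le> measure_pmf.expectation M f"
  using expectation_mono_finite[of M "\<lambda>_. c" f] assms by simp

lemma expectation_add_finite:
  fixes f g :: "'a \<Rightarrow> real"
  assumes "finite (set_pmf M)"
  shows "measure_pmf.expectation M (\<lambda>x. f x + g x)
       = measure_pmf.expectation M f + measure_pmf.expectation M g"
  using assms by (simp add: integrable_measure_pmf_finite)

lemma expectation_indicator_singleton:
  "measure_pmf.expectation M (\<lambda>p. if p = a then 1 else 0 :: real) = pmf M a"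
  using integral_measure_pmf_real[of "{a}" M "\<lambda>p. if p = a then 1 else 0 :: real"]
  by (auto split: if_splits)

section \<open>Expected number of errors\<close>

definition step_cost :: "nat \<times> bool option \<times> bool \<times> bool \<Rightarrow> real" where
  "step_cost e = (case e of (x, p, y, b) \<Rightarrow>
     (if p \<noteq> None \<and> p \<noteq> Some y then 1 else 0) + (if p = None \<and> \<not> b then 1 else 0))"

definition total_err :: "trace \<Rightarrow> real" where
  "total_err h = real (err_mis h) + real (err_abs h)"

lemma total_err_Nil [simp]: "total_err [] = 0"
  by (simp add: total_err_def err_mis_def err_abs_def)

lemma total_err_snoc: "total_err (h @ [e]) = total_err h + step_cost e"
  by (cases e) (auto simp: total_err_def err_mis_def err_abs_def step_cost_def)

lemma step_cost_nonneg: "0 \<le> step_cost e"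
  by (cases e) (auto simp: step_cost_def)

definition round_cost ::
  "learner \<Rightarrow> (nat \<Rightarrow> bool) \<Rightarrow> (nat \<Rightarrow> nat pmf) \<Rightarrow> (nat \<Rightarrow> bool) \<Rightarrow> nat \<Rightarrow> history \<Rightarrow> real" where
  "round_cost L c X q t h = measure_pmf.expectation (X t) (\<lambda>x.
     measure_pmf.expectation (L h x) (\<lambda>p. step_cost (x, p, c x, q t)))"

lemma round_cost_nonneg: "0 \<le> round_cost L c X q t h"
  unfolding round_cost_def by (intro integral_nonneg_AE AE_I2 step_cost_nonneg)

lemma expectation_total_err_play:
  assumes fin: "\<And>s. finite (set_pmf (X s))"
  shows "measure_pmf.expectation (play L c X q n) total_err
       = (\<Sum>t<n. measure_pmf.expectation (play_view L c X t) (round_cost L c X q t))"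
proof (induction n)
  case 0
  then show ?case by simp
next
  case (Suc n)
  let ?P = "play L c X q n"
  have fin_play: "finite (set_pmf ?P)" by (rule finite_set_play) (rule fin)
  have "measure_pmf.expectation (play L c X q (Suc n)) total_err
      = measure_pmf.expectation ?P (\<lambda>h. measure_pmf.expectation (X n) (\<lambda>x.
          measure_pmf.expectation (L (visible h) x) (\<lambda>p. total_err (h @ [(x, p, c x, q n)]))))"
    by (simp add: expectation_bind_pmf_finite fin_play fin finite_set_pmf_option_bool)
  also have "\<dots> = measure_pmf.expectation ?P (\<lambda>h. total_err h + round_cost L c X q n (visible h))"
    by (simp add: total_err_snoc fin finite_set_pmf_option_bool integrable_measure_pmf_finite round_cost_def)
  also have "\<dots> = measure_pmf.expectation ?P total_err
      + measure_pmf.expectation (map_pmf visible ?P) (round_cost L c X q n)"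
    by (simp add: expectation_add_finite[OF fin_play])
  finally show ?case using Suc by (simp add: map_visible_play)
qed

section \<open>Prefix concepts\<close>

definition prefix_concept :: "nat list \<Rightarrow> nat \<Rightarrow> bool" where
  "prefix_concept w x \<longleftrightarrow> prefix (list_decode x) w"

lemma shatters_prefix_concepts_card_le_1:
  assumes shatters: "shatters (range prefix_concept) S" and "finite S"
  shows "card S \<le> 1"
proof -
  have realise: "\<exists>w. \<forall>x\<in>S. prefix (list_decode x) w \<longleftrightarrow> x \<in> B" if "B \<subseteq> S" for B
    using shatters that unfolding shatters_def prefix_concept_def by blast
  have "a = b" if "a \<in> S" "b \<in> S" for a b
  proof (rule ccontr)
    assume "a \<noteq> b"
    obtain w where "prefix (list_decode a) w" "prefix (list_decode b) w"
      using realise[of "{a, b}"] \<open>a \<in> S\<close> \<open>b \<in> S\<close> by auto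
    then have "prefix (list_decode a) (list_decode b) \<or> prefix (list_decode b) (list_decode a)"
      by (rule prefix_same_cases)
    moreover obtain wa where "\<forall>x\<in>S. prefix (list_decode x) wa \<longleftrightarrow> x = a"
      using realise[of "{a}"] \<open>a \<in> S\<close> by auto
    moreover obtain wb where "\<forall>x\<in>S. prefix (list_decode x) wb \<longleftrightarrow> x = b"
      using realise[of "{b}"] \<open>b \<in> S\<close> by auto
    ultimately show False
      using \<open>a \<in> S\<close> \<open>b \<in> S\<close> \<open>a \<noteq> b\<close> by (metis prefix_order.trans)
  qed
  then show ?thesis using card_le_Suc0_iff_eq[OF \<open>finite S\<close>] by auto
qed

lemma vc_dim_prefix_concepts: "vc_dim (range prefix_concept) = 1"
proof -
  let ?dims = "{enat (card S) |S. finite S \<and> shatters (range prefix_concept) S}"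
  have "shatters (range prefix_concept) {list_encode [0]}"
    unfolding shatters_def
  proof (intro allI impI)
    fix B assume "B \<subseteq> {list_encode [0]}"
    then consider "B = {}" | "B = {list_encode [0]}" by blast
    then show "\<exists>c\<in>range prefix_concept. \<forall>x\<in>{list_encode [0]}. c x \<longleftrightarrow> x \<in> B"
    proof cases
      case 1
      have "\<not> prefix_concept [] (list_encode [0])" by (simp add: prefix_concept_def)
      with 1 show ?thesis by blast
    next
      case 2
      have "prefix_concept [0] (list_encode [0])" by (simp add: prefix_concept_def)
      with 2 show ?thesis by blast
    qed
  qed
  then have "enat (card {list_encode [0]}) \<in> ?dims" by blast
  then have "1 \<le> Sup ?dims"
    using Sup_upper[of _ ?dims] by (simp add: one_enat_def)
  moreover have "Sup ?dims \<le> 1"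
    by (rule Sup_least) (auto simp: one_enat_def dest!: shatters_prefix_concepts_card_le_1)
  ultimately show ?thesis
    unfolding vc_dim_def by (rule antisym[rotated])
qed

section \<open>The adversary\<close>

definition child :: "nat list \<Rightarrow> nat \<Rightarrow> nat" where
  "child v i = list_encode (v @ [i])"

definition children :: "nat \<Rightarrow> nat list \<Rightarrow> nat pmf" where
  "children k v = map_pmf (child v) (pmf_of_set {..<k})"

definition words :: "nat \<Rightarrow> nat list set" where
  "words m = {\<sigma>. set \<sigma> \<subseteq> {..<2*m} \<and> length \<sigma> = m}"

definition injected :: "nat \<Rightarrow> nat \<Rightarrow> nat \<Rightarrow> bool" where
  "injected m J t \<longleftrightarrow> t div m < J"

text \<open>The law of the point of round \<open>t\<close> in the world \<open>(J, \<sigma>)\<close> once the injected points are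
  averaged out: a uniform child of \<open>take (t div m) \<sigma>\<close> while \<open>t div m < J\<close>, a draw from
  \<open>D\<close> afterwards.\<close>

definition schedule :: "nat \<Rightarrow> nat \<Rightarrow> nat list \<Rightarrow> nat \<Rightarrow> nat pmf" where
  "schedule m J \<sigma> t = children (2*m) (take (min (t div m) J) \<sigma>)"

definition adversary :: "nat \<Rightarrow> nat \<Rightarrow> adversary" where
  "adversary m T = bind_pmf (pmf_of_set ({0..m} \<times> words m)) (\<lambda>(J, \<sigma>).
     map_pmf (\<lambda>u. (prefix_concept (take J \<sigma>), children (2*m) (take J \<sigma>), injected m J,
                   \<lambda>t. child (take (t div m) \<sigma>) (u ! t)))
       (draws (\<lambda>_. pmf_of_set {..<2*m}) T))"

lemma prefix_concept_take_child:
  assumes "J \<le> length \<sigma>"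
  shows "prefix_concept (take J \<sigma>) (child (take b \<sigma>) k) \<longleftrightarrow> b < J \<and> \<sigma> ! b = k"
proof (cases "b < J")
  case True
  have prefix_iff_take: "prefix xs ys \<longleftrightarrow> length xs \<le> length ys \<and> take (length xs) ys = xs"
    for xs ys :: "nat list"
    by (metis append_eq_conv_conj prefix_def prefix_length_le)
  have "take (Suc b) (take J \<sigma>) = take b \<sigma> @ [\<sigma> ! b]"
    using True assms by (simp add: take_Suc_conv_app_nth)
  then show ?thesis
    using True assms by (auto simp: prefix_concept_def child_def prefix_iff_take min_def)
next
  case False
  then show ?thesis
    using assms by (auto simp: prefix_concept_def child_def dest!: prefix_length_le)
qed

lemma child_eq_child_iff: "child v i = child v' i' \<longleftrightarrow> v = v' \<and> i = i'"
  by (simp add: child_def list_encode_eq)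

lemma finite_words: "finite (words m)"
  unfolding words_def by (rule finite_lists_length_eq) simp

lemma words_nonempty: "words m \<noteq> {}"
  by (auto simp: words_def intro!: exI[of _ "replicate m 0"])

lemma set_pmf_children: "0 < k \<Longrightarrow> set_pmf (children k v) = child v ` {..<k}"
  by (simp add: children_def lessThan_empty_iff)

lemma finite_set_pmf_children: "0 < k \<Longrightarrow> finite (set_pmf (children k v))"
  by (simp add: set_pmf_children)

lemma expectation_children:
  "0 < k \<Longrightarrow> measure_pmf.expectation (children k v) g = (\<Sum>i<k. g (child v i)) / real k"
  by (simp add: children_def integral_pmf_of_set lessThan_empty_iff)

lemma finite_set_pmf_schedule: "0 < m \<Longrightarrow> finite (set_pmf (schedule m J \<sigma> t))"
  by (simp add: schedule_def finite_set_pmf_children)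

lemma schedule_eq_children:
  assumes "r div m \<le> j" "j \<le> J" "take j \<sigma>' = take j \<sigma>"
  shows "schedule m J \<sigma>' r = children (2*m) (take (r div m) \<sigma>)"
  using assms by (simp add: schedule_def min_def) (metis min.absorb1 take_take)

lemma play_view_schedule:
  assumes "t div m \<le> J" "take (t div m) \<sigma>' = take (t div m) \<sigma>"
  shows "play_view L c (schedule m J \<sigma>') t = play_view L c (\<lambda>r. children (2*m) (take (r div m) \<sigma>)) t"
  using assms by (intro play_view_cong schedule_eq_children) (auto intro: div_le_mono)

lemma set_pmf_adversary: "a \<in> set_pmf (adversary m T) \<Longrightarrow> fst a \<in> range prefix_concept"
  by (auto simp: adversary_def finite_words words_nonempty)

lemma game_adversary:
  "game (adversary m T) L T = bind_pmf (pmf_of_set ({0..m} \<times> words m))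
     (\<lambda>(J, \<sigma>). play L (prefix_concept (take J \<sigma>)) (schedule m J \<sigma>) (injected m J) T)"
proof -
  have "bind_pmf (draws (\<lambda>_. pmf_of_set {..<2*m}) T) (\<lambda>u.
      run L (prefix_concept (take J \<sigma>)) (children (2*m) (take J \<sigma>)) (injected m J)
        (\<lambda>t. child (take (t div m) \<sigma>) (u ! t)) T)
    = play L (prefix_concept (take J \<sigma>)) (schedule m J \<sigma>) (injected m J) T" for J \<sigma>
  proof -
    define Y where "Y = (\<lambda>t i. if injected m J t then return_pmf (child (take (t div m) \<sigma>) i)
                                else children (2*m) (take J \<sigma>))"
    have "bind_pmf (pmf_of_set {..<2*m}) (Y t) = schedule m J \<sigma> t" for t
      by (cases "t div m < J") (simp_all add: Y_def schedule_def injected_def children_def map_pmf_def)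
    moreover have "run L (prefix_concept (take J \<sigma>)) (children (2*m) (take J \<sigma>)) (injected m J)
        (\<lambda>t. child (take (t div m) \<sigma>) (u ! t)) T
      = play L (prefix_concept (take J \<sigma>)) (\<lambda>t. Y t (u ! t)) (injected m J) T" for u
      by (simp add: run_eq_play Y_def if_distrib)
    ultimately show ?thesis
      by (simp add: bind_draws_play[where Y = Y])
  qed
  then show ?thesis
    unfolding game_def adversary_def
    by (simp add: bind_assoc_pmf bind_map_pmf case_prod_beta split_beta')
qed

section \<open>The cost of a single round\<close>

definition expected_round_cost :: "learner \<Rightarrow> nat \<Rightarrow> nat \<Rightarrow> nat \<Rightarrow> nat list \<Rightarrow> real" where
  "expected_round_cost L m t J \<sigma> =
     measure_pmf.expectation (play_view L (prefix_concept (take J \<sigma>)) (schedule m J \<sigma>) t)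
       (round_cost L (prefix_concept (take J \<sigma>)) (schedule m J \<sigma>) (injected m J) t)"

lemma expected_round_cost_nonneg: "0 \<le> expected_round_cost L m t J \<sigma>"
  unfolding expected_round_cost_def by (intro integral_nonneg_AE AE_I2 round_cost_nonneg)

lemma round_cost_iid_phase:
  assumes "length \<sigma> = m" "t div m = j" "j < m"
  shows "round_cost L (prefix_concept (take j \<sigma>)) (schedule m j \<sigma>) (injected m j) t h
       = (\<Sum>i<2*m. 1 - pmf (L h (child (take j \<sigma>) i)) (Some False)) / real (2*m)"
proof -
  have "\<not> prefix_concept (take j \<sigma>) (child (take j \<sigma>) i)" for i
    using assms by (simp add: prefix_concept_take_child)
  moreover have "step_cost (x, p, False, False) = 1 - (if p = Some False then 1 else 0)" for x p
    by (auto simp: step_cost_def)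
  moreover have "measure_pmf.expectation M (\<lambda>p. 1 - (if p = Some False then 1 else 0 :: real))
      = 1 - pmf M (Some False)" for M :: "bool option pmf"
    by (simp add: integrable_measure_pmf_finite finite_set_pmf_option_bool expectation_indicator_singleton)
  ultimately show ?thesis
    using assms
    by (simp add: round_cost_def schedule_def injected_def expectation_children)
qed

lemma round_cost_injected_phase_ge:
  assumes "length \<sigma> = m" "t div m = j" "j < J" "J \<le> m" "i < 2*m"
  shows "pmf (L h (child (take j \<sigma>) i)) (Some False) / real (2*m)
       \<le> round_cost L (prefix_concept (take J (\<sigma>[j:=i]))) (schedule m J (\<sigma>[j:=i])) (injected m J) t h"
proof -
  let ?c = "prefix_concept (take J (\<sigma>[j:=i]))"
  let ?cost = "\<lambda>x. measure_pmf.expectation (L h x) (\<lambda>p. step_cost (x, p, ?c x, True))"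
  have "?c (child (take j \<sigma>) i)"
    using assms prefix_concept_take_child[of J "\<sigma>[j:=i]" j i] by simp
  moreover have "step_cost (x, p, True, True) = (if p = Some False then 1 else 0)" for x p
    by (auto simp: step_cost_def)
  ultimately have "pmf (L h (child (take j \<sigma>) i)) (Some False) = ?cost (child (take j \<sigma>) i)"
    by (simp add: expectation_indicator_singleton)
  also have "\<dots> \<le> (\<Sum>i'<2*m. ?cost (child (take j \<sigma>) i'))"
    using assms(5)
    by (intro member_le_sum[where f = "\<lambda>i'. ?cost (child (take j \<sigma>) i')"])
       (auto intro!: integral_nonneg_AE step_cost_nonneg)
  moreover have "schedule m J (\<sigma>[j:=i]) t = children (2*m) (take j \<sigma>)"
    using assms by (simp add: schedule_def)
  ultimately show ?thesis
    using assms by (simp add: round_cost_def injected_def expectation_children divide_right_mono)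
qed

lemma pmf_play_view_injected_phase:
  assumes "length \<sigma> = m" "t div m = j" "j < J" "J \<le> m" "child (take j \<sigma>) i \<notin> fst ` set h"
  shows "pmf (play_view L (prefix_concept (take J (\<sigma>[j:=i]))) (schedule m J (\<sigma>[j:=i])) t) h
       = pmf (play_view L (prefix_concept (take j \<sigma>)) (schedule m j \<sigma>) t) h"
proof -
  let ?\<sigma>' = "\<sigma>[j:=i]"
  let ?X = "\<lambda>r. children (2*m) (take (r div m) \<sigma>)"
  have "pmf (play_view L (prefix_concept (take J ?\<sigma>')) ?X t) h
      = pmf (play_view L (prefix_concept (take j \<sigma>)) ?X t) h"
  proof (rule pmf_play_view_eq_if_agree[OF _ assms(5)])
    fix s x assume "s < t" "x \<in> set_pmf (?X s)" "x \<noteq> child (take j \<sigma>) i"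
    moreover have "0 < m" using assms by simp
    ultimately obtain k where x: "x = child (take (s div m) \<sigma>) k"
      by (auto simp: set_pmf_children)
    have "s div m \<le> j" using \<open>s < t\<close> assms(2) by (auto intro: div_le_mono)
    then have "take (s div m) ?\<sigma>' = take (s div m) \<sigma>" by simp
    then have "prefix_concept (take J ?\<sigma>') x \<longleftrightarrow> s div m < J \<and> ?\<sigma>' ! (s div m) = k"
      using prefix_concept_take_child[of J ?\<sigma>' "s div m" k] assms by (simp add: x)
    moreover have "prefix_concept (take j \<sigma>) x \<longleftrightarrow> s div m < j \<and> \<sigma> ! (s div m) = k"
      using prefix_concept_take_child[of j \<sigma> "s div m" k] assms by (simp add: x)
    ultimately show "prefix_concept (take J ?\<sigma>') x = prefix_concept (take j \<sigma>) x"
      using \<open>s div m \<le> j\<close> \<open>x \<noteq> child (take j \<sigma>) i\<close> assms by (auto simp: x le_less)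
  qed
  moreover have "play_view L c (schedule m J' \<sigma>'') t = play_view L c ?X t"
    if "j \<le> J'" "take j \<sigma>'' = take j \<sigma>" for c J' \<sigma>''
    using that assms(2) by (intro play_view_schedule) auto
  ultimately show ?thesis
    using assms by simp
qed

text \<open>In the rounds before \<open>t\<close>, only the rounds of the current phase show children of
  \<open>take (t div m) \<sigma>\<close>.\<close>

lemma card_seen_children_le:
  assumes h: "h \<in> set_pmf (play_view L c (\<lambda>r. children (2*m) (take (r div m) \<sigma>)) t)"
    and "length \<sigma> = m" "t div m < m"
  shows "card {i\<in>{..<2*m}. child (take (t div m) \<sigma>) i \<in> fst ` set h} \<le> t mod m"
proof -
  let ?v = "take (t div m) \<sigma>"
  have seen_in_phase: "child ?v i \<in> (\<lambda>r. fst (h ! r)) ` {t div m * m..<t}"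
    if "child ?v i \<in> fst ` set h" for i
  proof -
    have "\<exists>r<t. fst (h ! r) = child ?v i"
      using that set_play_view(1)[OF h] by (force simp: in_set_conv_nth)
    then obtain r where r: "r < t" "fst (h ! r) = child ?v i" by blast
    moreover have "0 < m" using assms by simp
    ultimately obtain k where "child ?v i = child (take (r div m) \<sigma>) k"
      using set_play_view(2)[OF h r(1)] by (auto simp: set_pmf_children)
    then have "length ?v = length (take (r div m) \<sigma>)"
      by (simp add: child_eq_child_iff)
    moreover have "r div m \<le> t div m" using r(1) by (simp add: div_le_mono)
    ultimately have "r div m = t div m" using assms by simp
    then have "t div m * m \<le> r" by (metis div_times_less_eq_dividend)
    with r show ?thesis by force
  qed
  then have "child ?v ` {i\<in>{..<2*m}. child ?v i \<in> fst ` set h} \<subseteq> (\<lambda>r. fst (h ! r)) ` {t div m * m..<t}"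
    by blast
  then have "card (child ?v ` {i\<in>{..<2*m}. child ?v i \<in> fst ` set h}) \<le> card {t div m * m..<t}"
    by (meson card_image_le card_mono finite_atLeastLessThan finite_imageI order_trans)
  moreover have "inj (child ?v)" by (simp add: inj_def child_eq_child_iff)
  ultimately show ?thesis
    by (simp add: card_image inj_on_subset minus_div_mult_eq_mod)
qed

lemma sum_fresh_children_ge:
  assumes "length \<sigma> = m" "t div m = j" "j < m"
    and h: "h \<in> set_pmf (play_view L c (schedule m j \<sigma>) t)"
  shows "real m \<le> (\<Sum>i<2*m. if child (take j \<sigma>) i \<in> fst ` set h then 0 else 1)"
proof -
  let ?seen = "{i\<in>{..<2*m}. child (take j \<sigma>) i \<in> fst ` set h}"
  have "card ?seen \<le> t mod m"
  proof -
    have "h \<in> set_pmf (play_view L c (\<lambda>r. children (2*m) (take (r div m) \<sigma>)) t)"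
      using h assms play_view_schedule[of t m j \<sigma> \<sigma>] by simp
    then show ?thesis
      using card_seen_children_le[OF _ assms(1)] assms by blast
  qed
  also have "t mod m < m" using assms by simp
  finally have "real (card ?seen) < real m" by simp
  moreover have "(\<Sum>i<2*m. 1 - (if child (take j \<sigma>) i \<in> fst ` set h then 0 else 1))
      = real (card ?seen)"
    by (simp add: sum.inter_filter[symmetric] if_distrib[of "\<lambda>x. 1 - x"] cong: if_cong)
  ultimately show ?thesis
    by (simp add: sum_subtractf)
qed

lemma expected_round_cost_injected_phase_ge:
  assumes "length \<sigma> = m" "t div m = j" "j < J" "J \<le> m" "i < 2*m"
  shows "measure_pmf.expectation (play_view L (prefix_concept (take j \<sigma>)) (schedule m j \<sigma>) t)
           (\<lambda>h. (if child (take j \<sigma>) i \<in> fst ` set h then 0 else 1)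
                 * pmf (L h (child (take j \<sigma>) i)) (Some False) / real (2*m))
         \<le> expected_round_cost L m t J (\<sigma>[j:=i])"
proof -
  let ?V = "play_view L (prefix_concept (take j \<sigma>)) (schedule m j \<sigma>) t"
  let ?c' = "prefix_concept (take J (\<sigma>[j:=i]))"
  let ?V' = "play_view L ?c' (schedule m J (\<sigma>[j:=i])) t"
  let ?g = "\<lambda>h. (if child (take j \<sigma>) i \<in> fst ` set h then 0 else 1)
                 * pmf (L h (child (take j \<sigma>) i)) (Some False) / real (2*m)"
  have fin: "finite (set_pmf ?V)" "finite (set_pmf ?V')"
    using assms by (simp_all add: finite_set_play_view finite_set_pmf_schedule)
  have "measure_pmf.expectation ?V ?g = measure_pmf.expectation ?V' ?g"
    using assms pmf_play_view_injected_phase[OF assms(1-4)]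
    by (intro expectation_cong_pmf fin) (auto split: if_splits)
  also have "\<dots> \<le> measure_pmf.expectation ?V' (round_cost L ?c' (schedule m J (\<sigma>[j:=i])) (injected m J) t)"
  proof (rule expectation_mono_finite[OF fin(2)])
    fix h
    have "?g h \<le> pmf (L h (child (take j \<sigma>) i)) (Some False) / real (2*m)"
      by (simp add: divide_right_mono)
    also have "\<dots> \<le> round_cost L ?c' (schedule m J (\<sigma>[j:=i])) (injected m J) t h"
      using assms by (rule round_cost_injected_phase_ge)
    finally show "?g h \<le> round_cost L ?c' (schedule m J (\<sigma>[j:=i])) (injected m J) t h" .
  qed
  finally show ?thesis
    unfolding expected_round_cost_def .
qed

lemma sum_abstain_or_mistake_ge:
  fixes p f :: "'a \<Rightarrow> real"
  assumes "0 \<le> r" "r \<le> 1" "\<And>i. i \<in> I \<Longrightarrow> 0 \<le> p i \<and> p i \<le> 1 \<and> 0 \<le> f i \<and> f i \<le> 1"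
  shows "r * (\<Sum>i\<in>I. f i) \<le> (\<Sum>i\<in>I. (1 - p i) + r * (f i * p i))"
proof -
  have "r * f i \<le> (1 - p i) + r * (f i * p i)" if "i \<in> I" for i
  proof -
    have "0 \<le> (1 - p i) * (1 - r * f i)"
      using assms(1,2) assms(3)[OF that] by (simp add: mult_le_one)
    then show ?thesis by (simp add: algebra_simps)
  qed
  then show ?thesis by (simp add: sum_distrib_left sum_mono)
qed

lemma abstain_or_mistake_cost_ge:
  assumes "length \<sigma> = m" "t div m = j" "j < m"
    and h: "h \<in> set_pmf (play_view L c (schedule m j \<sigma>) t)"
  defines "\<pi> \<equiv> \<lambda>i. pmf (L h (child (take j \<sigma>) i)) (Some False)"
    and "fresh \<equiv> \<lambda>i. if child (take j \<sigma>) i \<in> fst ` set h then 0 else 1 :: real"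
  shows "(real m - real j) / (4 * real m)
       \<le> (\<Sum>i<2*m. (1 - \<pi> i) + (real m - real j) / real (2*m) * (fresh i * \<pi> i)) / real (2*m)"
proof -
  define r where "r = (real m - real j) / real (2*m)"
  have r: "0 \<le> r" "r \<le> 1" using assms by (auto simp: r_def)
  have "real m \<le> (\<Sum>i<2*m. fresh i)"
    using sum_fresh_children_ge[OF assms(1-3) h] by (simp add: fresh_def)
  then have "r * real m \<le> r * (\<Sum>i<2*m. fresh i)"
    using r by (simp add: mult_left_mono)
  also have "\<dots> \<le> (\<Sum>i<2*m. (1 - \<pi> i) + r * (fresh i * \<pi> i))"
    using r by (intro sum_abstain_or_mistake_ge) (auto simp: \<pi>_def fresh_def pmf_le_1)
  finally have "r * real m / real (2*m) \<le> (\<Sum>i<2*m. (1 - \<pi> i) + r * (fresh i * \<pi> i)) / real (2*m)"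
    by (rule divide_right_mono) simp
  moreover have "r * real m / real (2*m) = (real m - real j) / (4 * real m)"
    using assms by (simp add: r_def)
  ultimately show ?thesis by (simp add: r_def)
qed

lemma expected_round_cost_phase_ge:
  assumes "\<sigma> \<in> words m" "t div m = j" "j < m"
  shows "(real m - real j) / (4 * real m)
       \<le> expected_round_cost L m t j \<sigma>
         + (\<Sum>i<2*m. \<Sum>J\<in>{j<..m}. expected_round_cost L m t J (\<sigma>[j:=i])) / real (2*m)"
proof -
  have len: "length \<sigma> = m" using assms(1) by (simp add: words_def)
  let ?x = "child (take j \<sigma>)"
  let ?V = "play_view L (prefix_concept (take j \<sigma>)) (schedule m j \<sigma>) t"
  define \<pi> where "\<pi> h i = pmf (L h (?x i)) (Some False)" for h i
  define fresh where "fresh (h :: history) i = (if ?x i \<in> fst ` set h then 0 else 1 :: real)" for h i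
  define r where "r = (real m - real j) / real (2*m)"
  have finV: "finite (set_pmf ?V)"
    using assms by (simp add: finite_set_play_view finite_set_pmf_schedule)
  have deeper: "measure_pmf.expectation ?V (\<lambda>h. fresh h i * \<pi> h i / real (2*m))
      \<le> expected_round_cost L m t J (\<sigma>[j:=i])" if "J \<in> {j<..m}" "i < 2*m" for J i
    using expected_round_cost_injected_phase_ge[OF len assms(2)] that by (simp add: fresh_def \<pi>_def)
  let ?a = "\<lambda>i. measure_pmf.expectation ?V (\<lambda>h. fresh h i * \<pi> h i / real (2*m))"
  have "measure_pmf.expectation ?V (\<lambda>h. (\<Sum>i<2*m. (1 - \<pi> h i) + r * (fresh h i * \<pi> h i)) / real (2*m))
      = measure_pmf.expectation ?V (\<lambda>h. (\<Sum>i<2*m. 1 - \<pi> h i) / real (2*m)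
          + (\<Sum>i<2*m. r * (fresh h i * \<pi> h i / real (2*m))))"
    by (simp add: sum.distrib add_divide_distrib sum_divide_distrib)
  also have "\<dots> = measure_pmf.expectation ?V (\<lambda>h. (\<Sum>i<2*m. 1 - \<pi> h i) / real (2*m))
        + (\<Sum>i<2*m. r * ?a i)"
    by (simp add: integrable_measure_pmf_finite[OF finV])
  also have "\<dots> = measure_pmf.expectation ?V (\<lambda>h. (\<Sum>i<2*m. 1 - \<pi> h i) / real (2*m))
        + (\<Sum>i<2*m. \<Sum>J\<in>{j<..m}. ?a i) / real (2*m)"
    using assms by (simp add: r_def sum_divide_distrib)
  also have "\<dots> \<le> expected_round_cost L m t j \<sigma>
         + (\<Sum>i<2*m. \<Sum>J\<in>{j<..m}. expected_round_cost L m t J (\<sigma>[j:=i])) / real (2*m)"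
  proof (rule add_mono)
    show "measure_pmf.expectation ?V (\<lambda>h. (\<Sum>i<2*m. 1 - \<pi> h i) / real (2*m))
        \<le> expected_round_cost L m t j \<sigma>"
      unfolding expected_round_cost_def round_cost_iid_phase[OF len assms(2,3)] \<pi>_def
      by (rule order_refl)
    show "(\<Sum>i<2*m. \<Sum>J\<in>{j<..m}. ?a i) / real (2*m)
        \<le> (\<Sum>i<2*m. \<Sum>J\<in>{j<..m}. expected_round_cost L m t J (\<sigma>[j:=i])) / real (2*m)"
      by (intro divide_right_mono sum_mono deeper) auto
  qed
  finally have upper: "measure_pmf.expectation ?V (\<lambda>h. (\<Sum>i<2*m. (1 - \<pi> h i) + r * (fresh h i * \<pi> h i)) / real (2*m))
      \<le> expected_round_cost L m t j \<sigma>
         + (\<Sum>i<2*m. \<Sum>J\<in>{j<..m}. expected_round_cost L m t J (\<sigma>[j:=i])) / real (2*m)" .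
  have "(real m - real j) / (4 * real m)
      \<le> measure_pmf.expectation ?V (\<lambda>h. (\<Sum>i<2*m. (1 - \<pi> h i) + r * (fresh h i * \<pi> h i)) / real (2*m))"
    using abstain_or_mistake_cost_ge[OF len assms(2,3)]
    by (intro expectation_ge_const_finite[OF finV]) (simp add: r_def fresh_def \<pi>_def)
  with upper show ?thesis by linarith
qed

section \<open>Averaging over the worlds\<close>

lemma sum_words_list_update:
  fixes G :: "nat list \<Rightarrow> real"
  assumes "j < m"
  shows "(\<Sum>\<sigma>\<in>words m. \<Sum>i<2*m. G (\<sigma>[j:=i])) = real (2*m) * (\<Sum>\<sigma>\<in>words m. G \<sigma>)"
proof -
  let ?S = "words m \<times> {..<2*m}"
  define swap where "swap = (\<lambda>(\<sigma>::nat list, i::nat). (\<sigma>[j:=i], \<sigma> ! j))"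
  have swap_in: "swap (\<sigma>, i) \<in> ?S" if "(\<sigma>, i) \<in> ?S" for \<sigma> i
  proof -
    have "set (\<sigma>[j:=i]) \<subseteq> insert i (set \<sigma>)" by (rule set_update_subset_insert)
    moreover have "\<sigma> ! j \<in> set \<sigma>" using that assms by (simp add: words_def)
    ultimately show ?thesis using that by (auto simp: swap_def words_def)
  qed
  have swap_swap: "swap (swap p) = p" if "p \<in> ?S" for p
    using that assms by (auto simp: swap_def words_def)
  have "bij_betw swap ?S ?S"
    by (rule bij_betw_byWitness[where f' = swap]) (use swap_in swap_swap in force)+
  have "(\<Sum>\<sigma>\<in>words m. \<Sum>i<2*m. G (\<sigma>[j:=i])) = (\<Sum>p\<in>?S. G (fst (swap p)))"
    by (simp add: sum.cartesian_product swap_def case_prod_beta)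
  also have "\<dots> = (\<Sum>p\<in>?S. G (fst p))"
    using sum.reindex_bij_betw[OF \<open>bij_betw swap ?S ?S\<close>, of "\<lambda>p. G (fst p)"] by (simp add: o_def)
  also have "\<dots> = (\<Sum>\<sigma>\<in>words m. \<Sum>i<2*m. G \<sigma>)"
    unfolding sum.cartesian_product by (rule sum.cong) auto
  finally show ?thesis
    by (simp add: sum_distrib_left)
qed

lemma sum_expected_round_cost_ge:
  assumes "t < m * m"
  shows "real (card (words m)) * ((real m - real (t div m)) / (4 * real m))
       \<le> (\<Sum>J\<in>{0..m}. \<Sum>\<sigma>\<in>words m. expected_round_cost L m t J \<sigma>)"
proof -
  define j where "j = t div m"
  let ?F = "expected_round_cost L m t"
  have "j < m" using assms by (simp add: j_def less_mult_imp_div_less)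
  have "(\<Sum>J\<in>{j<..m}. \<Sum>\<sigma>\<in>words m. ?F J \<sigma>)
      = (\<Sum>J\<in>{j<..m}. (\<Sum>\<sigma>\<in>words m. \<Sum>i<2*m. ?F J (\<sigma>[j:=i])) / real (2*m))"
    using \<open>j < m\<close> by (simp add: sum_words_list_update)
  also have "\<dots> = (\<Sum>\<sigma>\<in>words m. (\<Sum>i<2*m. \<Sum>J\<in>{j<..m}. ?F J (\<sigma>[j:=i])) / real (2*m))"
    by (simp add: sum_divide_distrib[symmetric] sum.swap[of _ "{j<..m}"] sum.swap[of _ "{j<..m}" "{..<2*m}"])
  finally have deeper: "(\<Sum>J\<in>{j<..m}. \<Sum>\<sigma>\<in>words m. ?F J \<sigma>) = \<dots>" .
  have "real (card (words m)) * ((real m - real j) / (4 * real m))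
      \<le> (\<Sum>\<sigma>\<in>words m. ?F j \<sigma> + (\<Sum>i<2*m. \<Sum>J\<in>{j<..m}. ?F J (\<sigma>[j:=i])) / real (2*m))"
    using sum_mono[of "words m" "\<lambda>_. (real m - real j) / (4 * real m)"]
      expected_round_cost_phase_ge[OF _ j_def[symmetric] \<open>j < m\<close>] by simp
  also have "\<dots> = (\<Sum>J\<in>insert j {j<..m}. \<Sum>\<sigma>\<in>words m. ?F J \<sigma>)"
    by (simp add: deeper sum.distrib)
  also have "\<dots> \<le> (\<Sum>J\<in>{0..m}. \<Sum>\<sigma>\<in>words m. ?F J \<sigma>)"
    using \<open>j < m\<close> by (intro sum_mono2) (auto intro!: sum_nonneg expected_round_cost_nonneg)
  finally show ?thesis by (simp add: j_def)
qed

lemma sum_lessThan_real_diff: "(\<Sum>j<n. real n - real j) = real n * (real n + 1) / 2"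
proof (induction n)
  case (Suc n)
  have "(\<Sum>j<Suc n. real (Suc n) - real j) = (\<Sum>j<n. (real n - real j) + 1) + 1"
    by (simp add: algebra_simps)
  also have "\<dots> = real n * (real n + 1) / 2 + real n + 1"
    by (simp add: sum.distrib Suc)
  finally show ?case by (simp add: field_simps)
qed simp

lemma sum_phase_weights:
  "(\<Sum>t<m*m. real m - real (t div m)) = real m * (real m * (real m + 1) / 2)"
proof (cases "m = 0")
  case False
  have "(\<Sum>t<m*m. real m - real (t div m)) = (\<Sum>j<m. \<Sum>t\<in>{j*m..<j*m+m}. real m - real (t div m))"
    by (rule sum.nat_group[symmetric])
  also have "\<dots> = (\<Sum>j<m. \<Sum>t\<in>{j*m..<j*m+m}. real m - real j)"
    using False by (intro sum.cong refl) (simp add: div_nat_eqI mult.commute)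
  also have "\<dots> = real m * (\<Sum>j<m. real m - real j)"
    by (simp add: sum_distrib_left)
  finally show ?thesis by (simp add: sum_lessThan_real_diff)
qed simp

lemma floor_sqrt_bounds:
  assumes "1 \<le> T"
  shows "1 \<le> floor_sqrt T" "floor_sqrt T * floor_sqrt T \<le> T" "sqrt (real T) \<le> 2 * real (floor_sqrt T)"
proof -
  show "1 \<le> floor_sqrt T" "floor_sqrt T * floor_sqrt T \<le> T"
    using assms floor_sqrt_power2_le[of T] by (simp_all add: power2_eq_square Suc_le_eq)
  have "T < (floor_sqrt T + 1)\<^sup>2"
    using Suc_floor_sqrt_power2_gt[of T] by simp
  then have "real T < (real (floor_sqrt T) + 1)\<^sup>2"
    using of_nat_less_iff[of T "(floor_sqrt T + 1)\<^sup>2", where 'a = real] by (simp add: add.commute)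
  then have "sqrt (real T) < real (floor_sqrt T) + 1"
    by (intro real_less_lsqrt) simp_all
  with \<open>1 \<le> floor_sqrt T\<close> show "sqrt (real T) \<le> 2 * real (floor_sqrt T)"
    by simp
qed

lemma finite_set_pmf_game_adversary: "0 < m \<Longrightarrow> finite (set_pmf (game (adversary m T) L T))"
  by (simp add: game_adversary finite_words words_nonempty finite_set_play finite_set_pmf_schedule
      split_beta')

lemma expectation_total_err_adversary:
  assumes "0 < m"
  shows "measure_pmf.expectation (game (adversary m T) L T) total_err
       = (\<Sum>t<T. \<Sum>J\<in>{0..m}. \<Sum>\<sigma>\<in>words m. expected_round_cost L m t J \<sigma>)
         / real (card ({0..m} \<times> words m))"
proof -
  let ?W = "{0..m} \<times> words m"
  let ?play = "\<lambda>(J, \<sigma>). play L (prefix_concept (take J \<sigma>)) (schedule m J \<sigma>) (injected m J) T"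
  let ?F = "expected_round_cost L m"
  have "finite (set_pmf (?play w))" for w
    using assms by (simp add: finite_set_play finite_set_pmf_schedule split: prod.split)
  then have "measure_pmf.expectation (game (adversary m T) L T) total_err
      = (\<Sum>w\<in>?W. measure_pmf.expectation (?play w) total_err / real (card ?W))"
    unfolding game_adversary
    by (subst pmf_expectation_bind_pmf_of_set)
       (simp_all add: finite_words words_nonempty split_beta' divide_inverse_commute)
  also have "\<dots> = (\<Sum>(J, \<sigma>)\<in>?W. \<Sum>t<T. ?F t J \<sigma>) / real (card ?W)"
    using assms
    by (auto simp: sum_divide_distrib[symmetric] expectation_total_err_play finite_set_pmf_schedule
        expected_round_cost_def intro!: sum.cong)
  also have "(\<Sum>(J, \<sigma>)\<in>?W. \<Sum>t<T. ?F t J \<sigma>) = (\<Sum>J\<in>{0..m}. \<Sum>t<T. \<Sum>\<sigma>\<in>words m. ?F t J \<sigma>)"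
    by (simp add: sum.cartesian_product[symmetric] sum.swap[of _ "words m"])
  also have "\<dots> = (\<Sum>t<T. \<Sum>J\<in>{0..m}. \<Sum>\<sigma>\<in>words m. ?F t J \<sigma>)"
    by (rule sum.swap)
  finally show ?thesis .
qed

lemma expectation_errors_adversary_ge:
  assumes "1 \<le> m" "m * m \<le> T"
  shows "real m / 8 \<le> measure_pmf.expectation (game (adversary m T) L T) (\<lambda>h. real (err_mis h))
                     + measure_pmf.expectation (game (adversary m T) L T) (\<lambda>h. real (err_abs h))"
proof -
  let ?F = "expected_round_cost L m"
  define c where "c = real (card (words m))"
  have "0 < c" by (simp add: c_def card_gt_0_iff finite_words words_nonempty)
  have "(real m + 1) * c * (real m / 8) = c / (4 * real m) * (\<Sum>t<m*m. real m - real (t div m))"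
    using assms by (simp add: sum_phase_weights field_simps)
  also have "\<dots> = (\<Sum>t<m*m. c * ((real m - real (t div m)) / (4 * real m)))"
    by (simp add: sum_distrib_left)
  also have "\<dots> \<le> (\<Sum>t<m*m. \<Sum>J\<in>{0..m}. \<Sum>\<sigma>\<in>words m. ?F t J \<sigma>)"
    unfolding c_def by (intro sum_mono sum_expected_round_cost_ge) simp
  also have "\<dots> \<le> (\<Sum>t<T. \<Sum>J\<in>{0..m}. \<Sum>\<sigma>\<in>words m. ?F t J \<sigma>)"
    using assms by (intro sum_mono2) (auto intro!: sum_nonneg expected_round_cost_nonneg)
  finally have bound: "(real m + 1) * c * (real m / 8) \<le> (\<Sum>t<T. \<Sum>J\<in>{0..m}. \<Sum>\<sigma>\<in>words m. ?F t J \<sigma>)" .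
  have "real (card ({0..m} \<times> words m)) = (real m + 1) * c"
    by (simp add: card_cartesian_product c_def algebra_simps)
  moreover have "0 < (real m + 1) * c" using \<open>0 < c\<close> by simp
  ultimately have "real m / 8 \<le> measure_pmf.expectation (game (adversary m T) L T) total_err"
    using assms bound by (simp add: expectation_total_err_adversary pos_le_divide_eq mult.commute)
  moreover have "measure_pmf.expectation (game (adversary m T) L T) total_err
      = measure_pmf.expectation (game (adversary m T) L T) (\<lambda>h. real (err_mis h))
        + measure_pmf.expectation (game (adversary m T) L T) (\<lambda>h. real (err_abs h))"
    unfolding total_err_def using assms by (intro expectation_add_finite finite_set_pmf_game_adversary) simp
  ultimately show ?thesis by simp
qed

theorem theorem3p1:
  shows "\<exists>\<kappa>::real. \<kappa> > 0 \<and>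
    (\<exists>C :: (nat \<Rightarrow> bool) set. vc_dim C = 1 \<and>
      (\<forall>T::nat. T \<ge> 1 \<longrightarrow>
        (\<exists>A :: adversary. (\<forall>a \<in> set_pmf A. fst a \<in> C) \<and>
          (\<forall>L :: learner.
             measure_pmf.expectation (game A L T) (\<lambda>h. real (err_mis h))
           + measure_pmf.expectation (game A L T) (\<lambda>h. real (err_abs h))
           \<ge> \<kappa> * sqrt (real T)))))"
proof (intro exI[of _ "1 / 16"] exI[of _ "range prefix_concept"] conjI allI impI)
  show "(1 / 16 :: real) > 0" by simp
  show "vc_dim (range prefix_concept) = 1" by (rule vc_dim_prefix_concepts)
  fix T :: nat assume "T \<ge> 1"
  note m = floor_sqrt_bounds[OF this]
  show "\<exists>A. (\<forall>a\<in>set_pmf A. fst a \<in> range prefix_concept) \<and>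
      (\<forall>L. 1 / 16 * sqrt (real T) \<le> measure_pmf.expectation (game A L T) (\<lambda>h. real (err_mis h))
                               + measure_pmf.expectation (game A L T) (\<lambda>h. real (err_abs h)))"
  proof (intro exI[of _ "adversary (floor_sqrt T) T"] conjI ballI allI)
    show "fst a \<in> range prefix_concept" if "a \<in> set_pmf (adversary (floor_sqrt T) T)" for a
      using that by (rule set_pmf_adversary)
    show "1 / 16 * sqrt (real T)
        \<le> measure_pmf.expectation (game (adversary (floor_sqrt T) T) L T) (\<lambda>h. real (err_mis h))
          + measure_pmf.expectation (game (adversary (floor_sqrt T) T) L T) (\<lambda>h. real (err_abs h))" for L
      using m(3) expectation_errors_adversary_ge[OF m(1,2), of L] by linarith
  qed
qed

end
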